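(* Let $X=(X_1,\dots,X_p)$ be a jointly continuous random vector in $\mathbb{R}^p$ and let $a_1,\dots,a_{\mathcal{R}}$ be rationally independent real numbers. Let $\mathcal{L}=\{X_ia_j:1\le i\le p,1\le j\le\mathcal{R}\}$ (viewed as a family of $p\mathcal{R}$ reals). Then $$\mathbb{P}(\mathcal{L}\text{ is rationally independent})=1.$$
   Context: A random vector in $\mathbb{R}^p$ is jointly continuous if it has a joint density with respect to Lebesgue measure. A finite family of reals $(x_k)$ is rationally independent if $\sum_kq_kx_k=0$ with $q_k\in\mathbb{Q}$ implies all $q_k=0$. *)

theory Defs
  imports "HOL-Probability.Probability"
begin

definition rationally_independent :: "('i::finite \<Rightarrow> real) \<Rightarrow> bool" where
  "rationally_independent x \<longleftrightarrow>
     (\<forall>q :: 'i \<Rightarrow> real. (\<forall>k. q k \<in> \<rat>) \<and> (\<Sum>k\<in>UNIV. q k * x k) = 0 \<longrightarrow> (\<forall>k. q k = 0))"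

definition jointly_continuous :: "'a measure \<Rightarrow> ('a \<Rightarrow> real ^ 'p) \<Rightarrow> bool" where
  "jointly_continuous M X \<longleftrightarrow> (\<exists>f. distributed M lborel X f)"

end

theory Submission
  imports Defs
begin

text \<open>A rational relation \<open>\<Sum>\<^sub>i\<^sub>,\<^sub>j q\<^sub>i\<^sub>j X\<^sub>i a\<^sub>j = 0\<close> among the products says that \<open>X\<close> lies on the
  hyperplane with normal \<open>c\<^sub>i = \<Sum>\<^sub>j q\<^sub>i\<^sub>j a\<^sub>j\<close>, and rational independence of the \<open>a\<^sub>j\<close> makes
  \<open>c \<noteq> 0\<close> unless \<open>q = 0\<close>. So the bad event is that \<open>X\<close> falls into a countable union of
  hyperplanes, a Lebesgue null set, which a random vector with a density avoids almost surely.\<close>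

lemma null_sets_lborel_hyperplane:
  fixes c :: "'a::euclidean_space"
  assumes "c \<noteq> 0"
  shows "{x. c \<bullet> x = b} \<in> null_sets lborel"
proof -
  have "{x. c \<bullet> x = b} \<in> sets lborel"
    unfolding sets_lborel by (rule borel_closed[OF closed_hyperplane])
  moreover have "negligible {x. c \<bullet> x = b}"
    using assms by (intro negligible_hyperplane) simp
  ultimately show ?thesis
    by (simp add: null_sets_completion_iff negligible_iff_null_sets)
qed

lemma (in prob_space) prob_distributed_eq_1:
  assumes "distributed M N X f"
    and "{x \<in> space N. \<not> P x} \<in> null_sets N"
  shows "{\<omega> \<in> space M. P (X \<omega>)} \<in> events \<and> prob {\<omega> \<in> space M. P (X \<omega>)} = 1"
proof -
  have "{x \<in> space N. P x} = space N - {x \<in> space N. \<not> P x}"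
    by blast
  then have "{x \<in> space N. P x} \<in> sets N"
    using assms(2) by auto
  then have pred_P: "Measurable.pred N P"
    using pred_sets1[OF _ measurable_ident_sets[OF refl]] by simp
  have events: "{\<omega> \<in> space M. P (X \<omega>)} \<in> events"
    using pred_P assms(1) by measurable
  have "AE x in N. P x"
    using assms(2) by (rule AE_I') simp
  then have "AE \<omega> in M. P (X \<omega>)"
    using distributed_AE2[OF assms(1) pred_P] by (auto elim: AE_mp)
  with events show ?thesis
    using prob_Collect_eq_1 by simp
qed

definition relation_normal :: "('r::finite \<Rightarrow> real) \<Rightarrow> ('p \<times> 'r \<Rightarrow> real) \<Rightarrow> real ^ 'p::finite"
  where "relation_normal a q = (\<chi> i. \<Sum>j\<in>UNIV. q (i, j) * a j)"

lemma sum_products_eq_inner_relation_normal: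
  fixes x :: "real ^ 'p" and a :: "'r::finite \<Rightarrow> real"
  shows "(\<Sum>k\<in>UNIV. q k * (case k of (i, j) \<Rightarrow> x $ i * a j)) = relation_normal a q \<bullet> x"
proof -
  have "(\<Sum>k\<in>UNIV. q k * (case k of (i, j) \<Rightarrow> x $ i * a j))
      = (\<Sum>i\<in>UNIV. \<Sum>j\<in>UNIV. q (i, j) * (x $ i * a j))"
    by (simp add: sum.cartesian_product case_prod_unfold flip: UNIV_Times_UNIV)
  also have "\<dots> = (\<Sum>i\<in>UNIV. (\<Sum>j\<in>UNIV. q (i, j) * a j) * x $ i)"
    by (simp add: sum_distrib_left sum_distrib_right mult_ac)
  finally show ?thesis
    by (simp add: relation_normal_def inner_vec_def)
qed

lemma relation_normal_eq_0_iff: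
  fixes a :: "'r::finite \<Rightarrow> real"
  assumes "rationally_independent a" and "\<forall>k. q k \<in> \<rat>"
  shows "(relation_normal a q :: real ^ 'p::finite) = 0 \<longleftrightarrow> (\<forall>k. q k = 0)"
proof
  assume normal_0: "(relation_normal a q :: real ^ 'p) = 0"
  have "\<forall>j. q (i, j) = 0" for i :: 'p
  proof -
    have "(\<Sum>j\<in>UNIV. q (i, j) * a j) = (relation_normal a q :: real ^ 'p) $ i"
      by (simp add: relation_normal_def)
    then have "(\<Sum>j\<in>UNIV. q (i, j) * a j) = 0"
      by (simp add: normal_0)
    moreover have "\<forall>j. q (i, j) \<in> \<rat>"
      using assms(2) by simp
    ultimately show ?thesis
      using spec[OF assms(1)[unfolded rationally_independent_def], of "\<lambda>j. q (i, j)"] by blast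
  qed
  then show "\<forall>k. q k = 0"
    by simp
qed (simp add: relation_normal_def vec_eq_iff)

lemma countable_rational_valued:
  "countable {q :: 'i::finite \<Rightarrow> real. \<forall>k. q k \<in> \<rat>}"
proof -
  have "{q :: 'i \<Rightarrow> real. \<forall>k. q k \<in> \<rat>} = (\<Pi>\<^sub>E k\<in>UNIV. \<rat>)"
    by (auto simp: PiE_def)
  then show ?thesis
    by (simp add: countable_PiE countable_rat)
qed

lemma rationally_dependent_products_eq_UN:
  fixes a :: "'r::finite \<Rightarrow> real"
  shows "{x :: real ^ 'p. \<not> rationally_independent (\<lambda>(i::'p, j::'r). x $ i * a j)}
    = (\<Union>q \<in> {q. (\<forall>k. q k \<in> \<rat>) \<and> (\<exists>k. q k \<noteq> 0)}. {x. relation_normal a q \<bullet> x = 0})"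
proof -
  have "\<not> rationally_independent (\<lambda>(i::'p, j::'r). x $ i * a j) \<longleftrightarrow>
      (\<exists>q. (\<forall>k. q k \<in> \<rat>) \<and> (\<exists>k. q k \<noteq> 0) \<and> relation_normal a q \<bullet> x = 0)" for x
    unfolding rationally_independent_def sum_products_eq_inner_relation_normal by blast
  then show ?thesis
    by blast
qed

lemma null_sets_rationally_dependent_products:
  fixes a :: "'r::finite \<Rightarrow> real"
  assumes "rationally_independent a"
  shows "{x :: real ^ 'p. \<not> rationally_independent (\<lambda>(i::'p, j::'r). x $ i * a j)}
    \<in> null_sets lborel"
  unfolding rationally_dependent_products_eq_UN
proof (rule null_sets_UN')
  show "countable {q :: 'p \<times> 'r \<Rightarrow> real. (\<forall>k. q k \<in> \<rat>) \<and> (\<exists>k. q k \<noteq> 0)}"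
    by (rule countable_subset[OF _ countable_rational_valued]) blast
next
  fix q :: "'p \<times> 'r \<Rightarrow> real"
  assume "q \<in> {q. (\<forall>k. q k \<in> \<rat>) \<and> (\<exists>k. q k \<noteq> 0)}"
  then have "(relation_normal a q :: real ^ 'p) \<noteq> 0"
    using relation_normal_eq_0_iff[OF assms] by blast
  then show "{x. relation_normal a q \<bullet> x = 0} \<in> null_sets lborel"
    by (rule null_sets_lborel_hyperplane)
qed

theorem lemma5:
  fixes M :: "'a measure"
    and X :: "'a \<Rightarrow> real ^ 'p"
    and a :: "'r::finite \<Rightarrow> real"
  assumes "prob_space M"
    and "jointly_continuous M X"
    and "rationally_independent a"
  shows "{\<omega> \<in> space M. rationally_independent (\<lambda>(i::'p, j::'r). X \<omega> $ i * a j)} \<in> sets M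
    \<and> measure M {\<omega> \<in> space M. rationally_independent (\<lambda>(i::'p, j::'r). X \<omega> $ i * a j)} = 1"
proof -
  interpret prob_space M by fact
  obtain f where "distributed M lborel X f"
    using assms(2) unfolding jointly_continuous_def by blast
  moreover have "{x \<in> space lborel. \<not> rationally_independent (\<lambda>(i::'p, j::'r). x $ i * a j)}
      \<in> null_sets lborel"
    using null_sets_rationally_dependent_products[OF assms(3)] by simp
  ultimately show ?thesis
    by (rule prob_distributed_eq_1)
qed

end
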